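(* Fix an integer $q\ge 2$. There is a constant $C>0$ depending only on $q$ such that for every $\varepsilon\in(0,1/C)$ there exists $n_0$ with the following property. Let $n\ge n_0$, let $t$ be a positive integer with $t\le 10\sqrt{n}$, and let $S\subseteq[q]^n$ satisfy $\Delta(G[S])\le n^5$. Let \[ S_1 = \left\{ v\in S : \deg_k(v) \le \varepsilon n^{\lceil k/2\rceil/2} \text{ for each }k=1,\dots,20\right\}. \] Then $|S_1|\le (1 + C\varepsilon)H_q(n,t)$.
   Context: $d$ is the Hamming distance on $[q]^n$. $V_q(n,r) = \sum_{i=0}^{r}\binom{n}{i}(q-1)^i$ and $H_q(n,t) = q^n / V_q(n,t)$. $G = G_{q,n,t}$ is the graph with vertex set $[q]^n$ in which two distinct vertices are adjacent iff their Hamming distance is at most $2t$; $G[S]$ is its induced subgraph on $S$ and $\Delta(\cdot)$ is the maximum degree. For $v\in S$ and $k\ge1$, $\deg_k(v)=|\{u\in S : d(u,v)=k\}|$. *)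

theory Defs
  imports "HOL-Analysis.Analysis"
begin

definition words :: "nat \<Rightarrow> nat \<Rightarrow> nat list set" where
  "words q n = {v. length v = n \<and> (\<forall>i<n. v ! i < q)}"

definition hamming :: "nat list \<Rightarrow> nat list \<Rightarrow> nat" where
  "hamming u v = card {i. i < length u \<and> u ! i \<noteq> v ! i}"

definition Vq :: "nat \<Rightarrow> nat \<Rightarrow> nat \<Rightarrow> nat" where
  "Vq q n r = (\<Sum>i=0..r. (n choose i) * (q - 1) ^ i)"

definition Hq :: "nat \<Rightarrow> nat \<Rightarrow> nat \<Rightarrow> real" where
  "Hq q n t = real (q ^ n) / real (Vq q n t)"

text \<open>Degree of v in G_{q,n,t}[S]: distinct vertices adjacent iff Hamming distance \<le> 2t.\<close>
definition Gdeg :: "nat \<Rightarrow> nat list set \<Rightarrow> nat list \<Rightarrow> nat" where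
  "Gdeg t S v = card {u \<in> S. u \<noteq> v \<and> hamming u v \<le> 2 * t}"

definition maxdeg :: "nat \<Rightarrow> nat list set \<Rightarrow> nat" where
  "maxdeg t S = (if S = {} then 0 else Max (Gdeg t S ` S))"

definition degk :: "nat list set \<Rightarrow> nat \<Rightarrow> nat list \<Rightarrow> nat" where
  "degk S k v = card {u \<in> S. hamming u v = k}"

end

(*
  Cover S1 by the Hamming balls of radius t around its points. A second-moment count gives
  |S1| V_q(n,t) <= q^n + sum over ordered pairs v ~= u in S1 of |B(v,t) \<inter> B(u,t)|.
  Two balls whose centres are at distance d <= 2t share at most q^d V_q(n, t - ceil(d/2))
  <= q^d (2t/n)^ceil(d/2) V_q(n,t) points, and (2t/n) sqrt n <= 20 since t <= 10 sqrt n.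
  For v in S1 the degree condition makes the centres at distance d <= 20 contribute O(eps) V_q,
  while the at most n^5 centres at distance 20 < d <= 2t contribute O(n^5 n^(-11/2)) V_q.
  So the overlap sum is O(eps) |S1| V_q, and rearranging gives |S1| <= (1 + C eps) H_q(n,t).
*)

theory Submission
  imports Defs "HOL-Library.FuncSet"
begin

definition hamming_ball :: "nat \<Rightarrow> nat \<Rightarrow> nat list \<Rightarrow> nat \<Rightarrow> nat list set" where
  "hamming_ball q n v r = {x \<in> words q n. hamming x v \<le> r}"

lemma words_eq_lists: "words q n = {xs. set xs \<subseteq> {..<q} \<and> length xs = n}"
  by (auto simp: words_def in_set_conv_nth subset_iff)

lemma finite_words [simp]: "finite (words q n)"
  by (simp add: words_eq_lists finite_lists_length_eq)

lemma card_words: "card (words q n) = q ^ n"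
  by (simp add: words_eq_lists card_lists_length_eq)

lemma hamming_ball_subset_words: "hamming_ball q n v r \<subseteq> words q n"
  by (auto simp: hamming_ball_def)

lemma hamming_eq_sum:
  assumes "length u = n"
  shows "hamming u v = (\<Sum>i<n. of_bool (u ! i \<noteq> v ! i))"
  using assms by (simp add: hamming_def Int_def conj_commute lessThan_def)

lemma hamming_pos:
  assumes "length u = length v" and "u \<noteq> v"
  shows "hamming u v > 0"
proof -
  obtain i where "i < length u" "u ! i \<noteq> v ! i"
    using assms nth_equalityI by blast
  then show ?thesis by (auto simp: hamming_def card_gt_0_iff)
qed

lemma bij_betw_hamming_sphere:
  assumes u: "u \<in> words q n"
  shows "bij_betw (\<lambda>(P, f). map (\<lambda>j. if j \<in> P then f j else u ! j) [0..<n])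
           (SIGMA P:{P. P \<subseteq> {..<n} \<and> card P = i}. \<Pi>\<^sub>E j\<in>P. {..<q} - {u ! j})
           {y \<in> words q n. hamming y u = i}"
proof -
  define diff_set where "diff_set y = {j. j < n \<and> y ! j \<noteq> u ! j}" for y
  show ?thesis
  proof (rule bij_betw_byWitness[where f' = "\<lambda>y. (diff_set y, restrict ((!) y) (diff_set y))"])
    let ?A = "SIGMA P:{P. P \<subseteq> {..<n} \<and> card P = i}. \<Pi>\<^sub>E j\<in>P. {..<q} - {u ! j}"
    have ult: "\<And>j. j < n \<Longrightarrow> u ! j < q"
      using u by (auto simp: words_def)
    let ?F = "\<lambda>(P, f). map (\<lambda>j. if j \<in> P then f j else u ! j) [0..<n]"
    have diff_set_F: "diff_set (?F (P, f)) = P"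
      if "P \<subseteq> {..<n}" "f \<in> (\<Pi>\<^sub>E j\<in>P. {..<q} - {u ! j})" for P f
      using that by (force simp: diff_set_def PiE_def Pi_def split: if_splits)
    show "\<forall>a\<in>?A. (\<lambda>y. (diff_set y, restrict ((!) y) (diff_set y))) (?F a) = a"
      using diff_set_F by (fastforce simp: PiE_def extensional_def fun_eq_iff)
    show "\<forall>y\<in>{y \<in> words q n. hamming y u = i}. ?F (diff_set y, restrict ((!) y) (diff_set y)) = y"
      by (auto simp: words_def diff_set_def intro!: nth_equalityI)
    show "?F ` ?A \<subseteq> {y \<in> words q n. hamming y u = i}"
    proof (rule image_subsetI)
      fix a assume "a \<in> ?A"
      then obtain P f where a: "a = (P, f)" and P: "P \<subseteq> {..<n}" "card P = i"
        and f: "f \<in> (\<Pi>\<^sub>E j\<in>P. {..<q} - {u ! j})" by auto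
      have "hamming (?F (P, f)) u = card (diff_set (?F (P, f)))"
        by (simp add: hamming_def diff_set_def)
      then show "?F a \<in> {y \<in> words q n. hamming y u = i}"
        using diff_set_F[OF P(1) f] P f ult a by (auto simp: words_def PiE_def Pi_def)
    qed
    show "(\<lambda>y. (diff_set y, restrict ((!) y) (diff_set y))) ` {y \<in> words q n. hamming y u = i}
            \<subseteq> ?A"
      by (auto simp: words_def hamming_def diff_set_def split: if_splits)
  qed
qed

lemma card_hamming_sphere:
  assumes u: "u \<in> words q n"
  shows "card {y \<in> words q n. hamming y u = i} = (n choose i) * (q - 1) ^ i"
proof -
  have ult: "\<And>j. j < n \<Longrightarrow> u ! j < q" using u by (auto simp: words_def)
  have card_fibre: "card (\<Pi>\<^sub>E j\<in>P. {..<q} - {u ! j}) = (q - 1) ^ i"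
    if "P \<subseteq> {..<n}" "card P = i" for P
  proof -
    have "card (\<Pi>\<^sub>E j\<in>P. {..<q} - {u ! j}) = (\<Prod>j\<in>P. card ({..<q} - {u ! j}))"
      using that by (intro card_PiE) (auto dest: finite_subset)
    also have "\<dots> = (\<Prod>j\<in>P. q - 1)"
      using that ult by (intro prod.cong) auto
    finally show ?thesis using that by simp
  qed
  have "card {y \<in> words q n. hamming y u = i}
      = card (SIGMA P:{P. P \<subseteq> {..<n} \<and> card P = i}. \<Pi>\<^sub>E j\<in>P. {..<q} - {u ! j})"
    using bij_betw_same_card[OF bij_betw_hamming_sphere[OF u]] by simp
  also have "\<dots> = (\<Sum>P | P \<subseteq> {..<n} \<and> card P = i. (q - 1) ^ i)"
    using card_fibre by (subst card_SigmaI) (auto dest: finite_subset intro!: finite_PiE)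
  also have "\<dots> = (n choose i) * (q - 1) ^ i"
    using n_subsets[of "{..<n}" i] by simp
  finally show ?thesis .
qed

lemma card_hamming_ball:
  assumes u: "u \<in> words q n"
  shows "card (hamming_ball q n u r) = Vq q n r"
proof -
  have "hamming_ball q n u r = (\<Union>i\<in>{0..r}. {y \<in> words q n. hamming y u = i})"
    by (auto simp: hamming_ball_def)
  then have "card (hamming_ball q n u r) = (\<Sum>i=0..r. card {y \<in> words q n. hamming y u = i})"
    by (auto intro!: card_UN_disjoint intro: finite_subset[OF _ finite_words])
  then show ?thesis by (simp add: card_hamming_sphere[OF u] Vq_def)
qed

lemma Vq_pos: "Vq q n r > 0"
  unfolding Vq_def by (rule ordered_comm_monoid_add_class.sum_pos2[of _ 0]) auto

lemma binomial_term_ratio: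
  fixes q n i :: nat
  assumes "q \<ge> 2" and "2 * i \<le> n"
  shows "n * ((n choose i) * (q - 1) ^ i) \<le> 2 * Suc i * ((n choose Suc i) * (q - 1) ^ Suc i)"
proof -
  have "n * (n choose i) \<le> 2 * ((n - i) * (n choose i))"
    using assms(2) by simp
  also have "(n - i) * (n choose i) = Suc i * (n choose Suc i)"
    by (simp only: binomial_absorb_comp binomial_absorption)
  finally have "n * (n choose i) \<le> 2 * Suc i * (n choose Suc i)" by simp
  moreover have "(q - 1) ^ i \<le> (q - 1) ^ Suc i"
    using assms(1) by simp
  ultimately have "(n * (n choose i)) * (q - 1) ^ i \<le> (2 * Suc i * (n choose Suc i)) * (q - 1) ^ Suc i"
    by (rule mult_le_mono)
  then show ?thesis
    by (simp only: mult.assoc)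
qed

lemma Vq_le_Vq_Suc:
  fixes q n r :: nat
  assumes "q \<ge> 2" and "2 * r \<le> n"
  shows "n * Vq q n r \<le> 2 * Suc r * Vq q n (Suc r)"
proof -
  have "n * Vq q n r = (\<Sum>i\<le>r. n * ((n choose i) * (q - 1) ^ i))"
    by (simp add: Vq_def atLeast0AtMost sum_distrib_left)
  also have "\<dots> \<le> (\<Sum>i\<le>r. 2 * Suc r * ((n choose Suc i) * (q - 1) ^ Suc i))"
  proof (rule sum_mono)
    fix i assume "i \<in> {..r}"
    then have i: "2 * i \<le> n" "2 * Suc i \<le> 2 * Suc r" using assms(2) by auto
    have "n * ((n choose i) * (q - 1) ^ i) \<le> 2 * Suc i * ((n choose Suc i) * (q - 1) ^ Suc i)"
      by (rule binomial_term_ratio[OF assms(1) i(1)])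
    also have "\<dots> \<le> 2 * Suc r * ((n choose Suc i) * (q - 1) ^ Suc i)"
      using i(2) by (rule mult_le_mono1)
    finally show "n * ((n choose i) * (q - 1) ^ i) \<le> 2 * Suc r * ((n choose Suc i) * (q - 1) ^ Suc i)" .
  qed
  also have "\<dots> = 2 * Suc r * (\<Sum>i\<in>{1..Suc r}. (n choose i) * (q - 1) ^ i)"
    by (simp only: sum_distrib_left atMost_atLeast0 sum.shift_bounds_cl_Suc_ivl One_nat_def)
  also have "\<dots> \<le> 2 * Suc r * Vq q n (Suc r)"
    unfolding Vq_def by (intro mult_le_mono2 sum_mono2) auto
  finally show ?thesis .
qed

lemma Vq_shrink:
  fixes q n t s :: nat
  assumes "q \<ge> 2" and "2 * t \<le> n" and "n > 0" and "s \<le> t"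
  shows "real (Vq q n (t - s)) \<le> (2 * t / n) ^ s * Vq q n t"
  using assms(4)
proof (induction s)
  case 0
  then show ?case by simp
next
  case (Suc s)
  have "n * Vq q n (t - Suc s) \<le> 2 * Suc (t - Suc s) * Vq q n (Suc (t - Suc s))"
    using assms(2) Suc.prems by (intro Vq_le_Vq_Suc[OF assms(1)]) linarith
  also have "\<dots> \<le> 2 * t * Vq q n (t - s)"
    using Suc.prems by (simp add: Suc_diff_Suc)
  finally have "real (Vq q n (t - Suc s)) \<le> (2 * t / n) * Vq q n (t - s)"
    using assms(3) by (simp add: field_simps flip: of_nat_mult)
  also have "\<dots> \<le> (2 * t / n) * ((2 * t / n) ^ s * Vq q n t)"
    using Suc by (intro mult_left_mono) auto
  finally show ?case by (simp add: mult.assoc)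
qed

lemma hamming_projection_le:
  assumes "length x = n" and "length u = n" and "length v = n"
  shows "2 * hamming (map (\<lambda>i. if u ! i \<noteq> v ! i then u ! i else x ! i) [0..<n]) u + hamming u v
           \<le> hamming x u + hamming x v"
proof -
  let ?y = "map (\<lambda>i. if u ! i \<noteq> v ! i then u ! i else x ! i) [0..<n]"
  have "2 * hamming ?y u + hamming u v
      = (\<Sum>i<n. 2 * of_bool (?y ! i \<noteq> u ! i) + of_bool (u ! i \<noteq> v ! i))"
    using assms by (simp add: hamming_eq_sum sum.distrib sum_distrib_left)
  also have "\<dots> \<le> (\<Sum>i<n. of_bool (x ! i \<noteq> u ! i) + of_bool (x ! i \<noteq> v ! i))"
    by (intro sum_mono) auto
  also have "\<dots> = hamming x u + hamming x v"
    using assms by (simp add: hamming_eq_sum sum.distrib)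
  finally show ?thesis .
qed

(* A common point x of the two balls is recovered from its entries on the d positions where
   u and v differ together with the projection of hamming_projection_le, which lies in a
   ball of radius t - ceil(d/2) around u. *)
lemma card_hamming_ball_inter_le:
  assumes u: "u \<in> words q n" and v: "v \<in> words q n" and d: "hamming u v \<le> 2 * t"
  shows "card (hamming_ball q n u t \<inter> hamming_ball q n v t)
           \<le> q ^ hamming u v * Vq q n (t - (hamming u v + 1) div 2)"
proof -
  define D where "D = {i. i < n \<and> u ! i \<noteq> v ! i}"
  define merge :: "nat list \<times> (nat \<Rightarrow> nat) \<Rightarrow> nat list"
    where "merge = (\<lambda>(y, g). map (\<lambda>i. if i \<in> D then g i else y ! i) [0..<n])"
  let ?B = "hamming_ball q n u (t - (hamming u v + 1) div 2)"
  have lens: "length u = n" "length v = n" and uq: "\<And>i. i < n \<Longrightarrow> u ! i < q"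
    using u v by (auto simp: words_def)
  have "hamming_ball q n u t \<inter> hamming_ball q n v t \<subseteq> merge ` (?B \<times> (\<Pi>\<^sub>E i\<in>D. {..<q}))"
  proof
    fix x assume x: "x \<in> hamming_ball q n u t \<inter> hamming_ball q n v t"
    define y where "y = map (\<lambda>i. if u ! i \<noteq> v ! i then u ! i else x ! i) [0..<n]"
    have xw: "length x = n" "\<And>i. i < n \<Longrightarrow> x ! i < q"
      using x by (auto simp: hamming_ball_def words_def)
    have "2 * hamming y u + hamming u v \<le> 2 * t"
      using hamming_projection_le[OF xw(1) lens] x by (simp add: y_def hamming_ball_def)
    then have "y \<in> ?B"
      using xw uq by (auto simp: y_def hamming_ball_def words_def)
    moreover have "restrict ((!) x) D \<in> (\<Pi>\<^sub>E i\<in>D. {..<q})"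
      using xw by (auto simp: D_def)
    moreover have "x = merge (y, restrict ((!) x) D)"
      using xw by (auto simp: merge_def y_def D_def intro!: nth_equalityI)
    ultimately show "x \<in> merge ` (?B \<times> (\<Pi>\<^sub>E i\<in>D. {..<q}))" by blast
  qed
  then have "card (hamming_ball q n u t \<inter> hamming_ball q n v t) \<le> card (?B \<times> (\<Pi>\<^sub>E i\<in>D. {..<q}))"
    by (rule surj_card_le[rotated])
      (auto simp: D_def intro!: finite_cartesian_product finite_PiE intro: finite_subset[OF hamming_ball_subset_words])
  also have "\<dots> = Vq q n (t - (hamming u v + 1) div 2) * q ^ hamming u v"
    using lens by (simp add: card_cartesian_product card_PiE card_hamming_ball[OF u] D_def hamming_def)
  finally show ?thesis by (simp add: mult.commute)
qed

lemma hamming_ball_inter_empty: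
  assumes "u \<in> words q n" and "v \<in> words q n" and "hamming u v > 2 * t"
  shows "hamming_ball q n u t \<inter> hamming_ball q n v t = {}"
proof -
  have "hamming u v \<le> hamming x u + hamming x v" if "x \<in> words q n" for x
    using hamming_projection_le[of x n u v] that assms by (simp add: words_def)
  then show ?thesis
    using assms(3) by (fastforce simp: hamming_ball_def)
qed

definition ball_overlap_bound :: "nat \<Rightarrow> nat \<Rightarrow> nat \<Rightarrow> nat \<Rightarrow> real" where
  "ball_overlap_bound q n t d =
     (if d \<le> 2 * t then real q ^ d * (2 * t / n) ^ ((d + 1) div 2) * Vq q n t else 0)"

lemma ball_overlap_bound_nonneg: "ball_overlap_bound q n t d \<ge> 0"
  by (simp add: ball_overlap_bound_def)

lemma card_hamming_ball_inter_bound: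
  assumes "q \<ge> 2" and "2 * t \<le> n" and "n > 0" and u: "u \<in> words q n" and v: "v \<in> words q n"
  shows "real (card (hamming_ball q n u t \<inter> hamming_ball q n v t))
           \<le> ball_overlap_bound q n t (hamming u v)"
proof (cases "hamming u v \<le> 2 * t")
  case True
  then have "real (card (hamming_ball q n u t \<inter> hamming_ball q n v t))
      \<le> real q ^ hamming u v * Vq q n (t - (hamming u v + 1) div 2)"
    using card_hamming_ball_inter_le[OF u v] by (metis of_nat_le_iff of_nat_mult of_nat_power)
  also have "\<dots> \<le> real q ^ hamming u v * ((2 * t / n) ^ ((hamming u v + 1) div 2) * Vq q n t)"
    using True by (intro mult_left_mono Vq_shrink[OF assms(1-3)]) auto
  finally show ?thesis using True by (simp add: ball_overlap_bound_def mult.assoc)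
next
  case False
  then show ?thesis using hamming_ball_inter_empty[OF u v] by (simp add: ball_overlap_bound_def)
qed

(* Sum 2 m <= 1 + m^2 over x \<in> W, where m x counts the sets A v containing x. *)
lemma sum_card_le_card_plus_overlaps:
  fixes A :: "'a \<Rightarrow> 'b set"
  assumes S: "finite S" and W: "finite W" and AW: "\<And>v. v \<in> S \<Longrightarrow> A v \<subseteq> W"
  shows "(\<Sum>v\<in>S. card (A v)) \<le> card W + (\<Sum>v\<in>S. \<Sum>u\<in>S - {v}. card (A v \<inter> A u))"
proof -
  define m :: "'b \<Rightarrow> real" where "m x = (\<Sum>v\<in>S. of_bool (x \<in> A v))" for x
  have count: "(\<Sum>x\<in>W. of_bool (x \<in> X)) = real (card X)" if "X \<subseteq> W" for X
    using W that by (simp add: Int_absorb1)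
  have first_moment: "(\<Sum>x\<in>W. m x) = (\<Sum>v\<in>S. real (card (A v)))"
    unfolding m_def using AW by (subst sum.swap) (simp add: count)
  have "(\<Sum>x\<in>W. m x ^ 2) = (\<Sum>v\<in>S. \<Sum>u\<in>S. \<Sum>x\<in>W. of_bool (x \<in> A v \<inter> A u))"
    by (simp add: m_def power2_eq_square sum_product sum.swap[of _ W] of_bool_conj)
  also have "\<dots> = (\<Sum>v\<in>S. \<Sum>u\<in>S. real (card (A v \<inter> A u)))"
    using AW by (intro sum.cong refl count) blast
  also have "\<dots> = (\<Sum>v\<in>S. real (card (A v)) + (\<Sum>u\<in>S - {v}. real (card (A v \<inter> A u))))"
    using S by (intro sum.cong refl) (simp add: sum.remove)
  finally have second_moment: "(\<Sum>x\<in>W. m x ^ 2)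
      = (\<Sum>v\<in>S. real (card (A v))) + (\<Sum>v\<in>S. \<Sum>u\<in>S - {v}. real (card (A v \<inter> A u)))"
    by (simp add: sum.distrib)
  have "2 * m x \<le> 1 + m x ^ 2" for x
    using sum_squares_ge_zero[of "m x - 1" 0] by (simp add: power2_eq_square algebra_simps)
  then have "2 * (\<Sum>x\<in>W. m x) \<le> (\<Sum>x\<in>W. 1 + m x ^ 2)"
    unfolding sum_distrib_left by (rule sum_mono)
  then have "2 * (\<Sum>x\<in>W. m x) \<le> real (card W) + (\<Sum>x\<in>W. m x ^ 2)"
    by (simp add: sum.distrib)
  then have "real (\<Sum>v\<in>S. card (A v)) \<le> real (card W + (\<Sum>v\<in>S. \<Sum>u\<in>S - {v}. card (A v \<inter> A u)))"
    using first_moment second_moment by simp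
  then show ?thesis
    by (simp only: of_nat_le_iff)
qed

lemma card_le_Hq_of_small_overlap:
  fixes x :: real
  assumes S: "S \<subseteq> words q n" and x: "0 \<le> x" "x \<le> 1 / 2"
    and overlap: "\<And>v. v \<in> S \<Longrightarrow>
      (\<Sum>u\<in>S - {v}. real (card (hamming_ball q n v t \<inter> hamming_ball q n u t))) \<le> x * Vq q n t"
  shows "real (card S) \<le> (1 + 2 * x) * Hq q n t"
proof -
  define V where "V = real (Vq q n t)"
  have V: "V > 0" by (simp add: V_def Vq_pos)
  have fin: "finite S" using S by (rule finite_subset) simp
  have "(\<Sum>v\<in>S. card (hamming_ball q n v t))
      \<le> card (words q n) + (\<Sum>v\<in>S. \<Sum>u\<in>S - {v}. card (hamming_ball q n v t \<inter> hamming_ball q n u t))"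
    by (rule sum_card_le_card_plus_overlaps[where A = "\<lambda>v. hamming_ball q n v t"])
      (simp_all add: fin hamming_ball_subset_words)
  moreover have "(\<Sum>v\<in>S. card (hamming_ball q n v t)) = (\<Sum>v\<in>S. Vq q n t)"
    using S by (intro sum.cong) (auto simp: card_hamming_ball)
  ultimately have "card S * Vq q n t
      \<le> q ^ n + (\<Sum>v\<in>S. \<Sum>u\<in>S - {v}. card (hamming_ball q n v t \<inter> hamming_ball q n u t))"
    by (simp add: card_words)
  then have "real (card S * Vq q n t)
      \<le> real (q ^ n + (\<Sum>v\<in>S. \<Sum>u\<in>S - {v}. card (hamming_ball q n v t \<inter> hamming_ball q n u t)))"
    by (rule of_nat_mono)
  then have "real (card S) * V
      \<le> real q ^ n + (\<Sum>v\<in>S. \<Sum>u\<in>S - {v}. real (card (hamming_ball q n v t \<inter> hamming_ball q n u t)))"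
    by (simp add: V_def)
  also have "\<dots> \<le> real q ^ n + real (card S) * (x * V)"
    using sum_mono[OF overlap] by (simp add: V_def)
  finally have "real (card S) * V * (1 - x) \<le> real q ^ n"
    by (simp add: algebra_simps)
  have "1 \<le> (1 - x) * (1 + 2 * x)"
  proof -
    have "x * (2 * x) \<le> x * 1"
      using x by (intro mult_left_mono) auto
    then show ?thesis by (simp add: algebra_simps)
  qed
  then have "real (card S) * V * 1 \<le> real (card S) * V * ((1 - x) * (1 + 2 * x))"
    using V by (intro mult_left_mono) auto
  also have "\<dots> = (real (card S) * V * (1 - x)) * (1 + 2 * x)"
    by (simp only: mult.assoc)
  also have "\<dots> \<le> real q ^ n * (1 + 2 * x)"
    using \<open>real (card S) * V * (1 - x) \<le> real q ^ n\<close> x by (intro mult_right_mono) auto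
  finally have "real (card S) * V \<le> real q ^ n * (1 + 2 * x)"
    by simp
  then show ?thesis
    using V by (simp add: Hq_def V_def field_simps)
qed

lemma ball_overlap_bound_near:
  assumes q: "q \<ge> 1" and d: "d \<le> 20" and rho: "2 * t / n * sqrt n \<le> 20"
  shows "sqrt n ^ ((d + 1) div 2) * ball_overlap_bound q n t d \<le> real q ^ 20 * 20 ^ 10 * Vq q n t"
proof (cases "d \<le> 2 * t")
  case True
  let ?s = "(d + 1) div 2"
  have "sqrt n ^ ?s * (2 * t / n) ^ ?s = (2 * t / n * sqrt n) ^ ?s"
    by (simp only: power_mult_distrib mult.commute)
  then have "sqrt n ^ ?s * ball_overlap_bound q n t d = real q ^ d * (2 * t / n * sqrt n) ^ ?s * Vq q n t"
    using True by (simp add: ball_overlap_bound_def mult_ac)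
  also have "\<dots> \<le> real q ^ 20 * 20 ^ 10 * Vq q n t"
  proof (intro mult_right_mono mult_mono)
    show "real q ^ d \<le> real q ^ 20" using q d by (intro power_increasing) auto
    have "(2 * t / n * sqrt n) ^ ?s \<le> 20 ^ ?s" using rho by (intro power_mono) auto
    also have "(20::real) ^ ?s \<le> 20 ^ 10" using d by (intro power_increasing) auto
    finally show "(2 * t / n * sqrt n) ^ ?s \<le> (20::real) ^ 10" .
  qed auto
  finally show ?thesis .
qed (simp add: ball_overlap_bound_def)

lemma ball_overlap_bound_far:
  assumes q: "q \<ge> 1" and d: "20 < d" and rho: "2 * t / n * sqrt n \<le> 20"
    and large: "20 * real q ^ 2 \<le> sqrt n"
  shows "ball_overlap_bound q n t d \<le> (20 * real q ^ 2 / sqrt n) ^ 11 * Vq q n t"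
proof (cases "d \<le> 2 * t")
  case True
  let ?s = "(d + 1) div 2"
  have "0 < 20 * real q ^ 2" using q by simp
  then have n: "sqrt n > 0" using large by linarith
  have "real q ^ d * (2 * t / n) ^ ?s \<le> (real q ^ 2) ^ ?s * (20 / sqrt n) ^ ?s"
  proof (intro mult_mono power_mono)
    show "real q ^ d \<le> (real q ^ 2) ^ ?s"
      unfolding power_mult[symmetric] using q by (intro power_increasing) auto
    show "2 * t / n \<le> 20 / sqrt n" using rho n by (simp add: field_simps)
  qed auto
  also have "\<dots> = (20 * real q ^ 2 / sqrt n) ^ ?s"
    by (simp add: power_mult_distrib power_divide)
  also have "\<dots> \<le> (20 * real q ^ 2 / sqrt n) ^ 11"
    using d large n by (intro power_decreasing) auto
  finally show ?thesis
    using True by (simp add: ball_overlap_bound_def mult_right_mono)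
qed (simp add: ball_overlap_bound_def)

lemma sum_overlap_near_le:
  fixes \<epsilon> :: real
  assumes q: "q \<ge> 2" and n: "n > 0" and tn: "2 * t \<le> n" and rho: "2 * t / n * sqrt n \<le> 20"
    and S: "S \<subseteq> words q n" and v: "v \<in> S" and \<epsilon>: "\<epsilon> \<ge> 0"
    and deg: "\<And>k. k \<in> {1..20} \<Longrightarrow> real (degk S k v) \<le> \<epsilon> * sqrt n ^ ((k + 1) div 2)"
  shows "(\<Sum>u\<in>{u \<in> S - {v}. hamming u v \<le> 20}. real (card (hamming_ball q n v t \<inter> hamming_ball q n u t)))
           \<le> 20 ^ 11 * real q ^ 20 * \<epsilon> * Vq q n t"
proof -
  let ?N = "{u \<in> S - {v}. hamming u v \<le> 20}"
  let ?b = "ball_overlap_bound q n t"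
  have fin: "finite S" using S by (rule finite_subset) simp
  have "(\<Sum>u\<in>?N. real (card (hamming_ball q n v t \<inter> hamming_ball q n u t))) \<le> (\<Sum>u\<in>?N. ?b (hamming u v))"
    using S v by (intro sum_mono) (auto simp: Int_commute intro!: card_hamming_ball_inter_bound[OF q tn n])
  also have "\<dots> = (\<Sum>k\<in>{1..20}. \<Sum>u\<in>{u \<in> ?N. hamming u v = k}. ?b (hamming u v))"
  proof (rule sum.group[symmetric])
    show "(\<lambda>u. hamming u v) ` ?N \<subseteq> {1..20}"
    proof (rule image_subsetI)
      fix u assume u: "u \<in> ?N"
      then have "length u = length v" "u \<noteq> v" using S v by (auto simp: words_def)
      then show "hamming u v \<in> {1..20}" using u hamming_pos by (simp add: Suc_le_eq)
    qed
  qed (use fin in auto)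
  also have "\<dots> \<le> (\<Sum>k\<in>{1..20::nat}. \<epsilon> * (real q ^ 20 * 20 ^ 10 * Vq q n t))"
  proof (rule sum_mono)
    fix k :: nat assume k: "k \<in> {1..20}"
    have "(\<Sum>u\<in>{u \<in> ?N. hamming u v = k}. ?b (hamming u v)) = card {u \<in> ?N. hamming u v = k} * ?b k"
      by simp
    also have "\<dots> \<le> degk S k v * ?b k"
      unfolding degk_def using fin
      by (intro mult_right_mono ball_overlap_bound_nonneg of_nat_mono card_mono) auto
    also have "\<dots> \<le> (\<epsilon> * sqrt n ^ ((k + 1) div 2)) * ?b k"
      using deg[OF k] by (intro mult_right_mono ball_overlap_bound_nonneg)
    also have "\<dots> \<le> \<epsilon> * (real q ^ 20 * 20 ^ 10 * Vq q n t)"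
    proof -
      have "sqrt n ^ ((k + 1) div 2) * ?b k \<le> real q ^ 20 * 20 ^ 10 * Vq q n t"
        using k q rho by (intro ball_overlap_bound_near) auto
      then show ?thesis using \<epsilon> by (simp add: mult_left_mono mult.assoc)
    qed
    finally show "(\<Sum>u\<in>{u \<in> ?N. hamming u v = k}. ?b (hamming u v)) \<le> \<epsilon> * (real q ^ 20 * 20 ^ 10 * Vq q n t)" .
  qed
  also have "\<dots> = 20 ^ 11 * real q ^ 20 * \<epsilon> * Vq q n t"
    by simp
  finally show ?thesis .
qed

lemma Gdeg_le_maxdeg: "finite S \<Longrightarrow> v \<in> S \<Longrightarrow> Gdeg t S v \<le> maxdeg t S"
  by (auto simp: maxdeg_def)

lemma sum_overlap_far_le:
  assumes q: "q \<ge> 2" and n: "n > 0" and tn: "2 * t \<le> n" and rho: "2 * t / n * sqrt n \<le> 20"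
    and large: "20 * real q ^ 2 \<le> sqrt n" and S: "S \<subseteq> words q n" and v: "v \<in> S"
  shows "(\<Sum>u\<in>{u \<in> S - {v}. \<not> hamming u v \<le> 20}. real (card (hamming_ball q n v t \<inter> hamming_ball q n u t)))
           \<le> maxdeg t S * (20 * real q ^ 2 / sqrt n) ^ 11 * Vq q n t"
proof -
  let ?F = "{u \<in> S - {v}. \<not> hamming u v \<le> 20}"
  let ?c = "(20 * real q ^ 2 / sqrt n) ^ 11 * Vq q n t"
  have fin: "finite S" using S by (rule finite_subset) simp
  have "(\<Sum>u\<in>?F. real (card (hamming_ball q n v t \<inter> hamming_ball q n u t)))
      \<le> (\<Sum>u\<in>?F. if hamming u v \<le> 2 * t then ?c else 0)"
  proof (rule sum_mono)
    fix u assume u: "u \<in> ?F"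
    have "real (card (hamming_ball q n v t \<inter> hamming_ball q n u t)) \<le> ball_overlap_bound q n t (hamming u v)"
      using S u v by (auto simp: Int_commute intro!: card_hamming_ball_inter_bound[OF q tn n])
    also have "\<dots> \<le> (if hamming u v \<le> 2 * t then ?c else 0)"
    proof (cases "hamming u v \<le> 2 * t")
      case True
      have "ball_overlap_bound q n t (hamming u v) \<le> ?c"
        using u q rho large by (intro ball_overlap_bound_far) auto
      then show ?thesis using True by simp
    qed (simp add: ball_overlap_bound_def)
    finally show "real (card (hamming_ball q n v t \<inter> hamming_ball q n u t))
        \<le> (if hamming u v \<le> 2 * t then ?c else 0)" .
  qed
  also have "\<dots> = card {u \<in> ?F. hamming u v \<le> 2 * t} * ?c"
    using fin by (simp flip: sum.inter_filter)
  also have "\<dots> \<le> maxdeg t S * ?c"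
  proof (intro mult_right_mono of_nat_mono)
    have "card {u \<in> ?F. hamming u v \<le> 2 * t} \<le> Gdeg t S v"
      unfolding Gdeg_def using fin by (intro card_mono) auto
    also have "\<dots> \<le> maxdeg t S" by (rule Gdeg_le_maxdeg[OF fin v])
    finally show "card {u \<in> ?F. hamming u v \<le> 2 * t} \<le> maxdeg t S" .
  qed simp
  finally show ?thesis by (simp add: mult.assoc)
qed

lemma sum_overlap_le:
  fixes \<epsilon> :: real
  assumes q: "q \<ge> 2" and t: "real t \<le> 10 * sqrt n" and large: "20 * real q ^ 2 \<le> sqrt n"
    and S: "S \<subseteq> words q n" and v: "v \<in> S" and \<epsilon>: "\<epsilon> \<ge> 0"
    and deg: "\<And>k. k \<in> {1..20} \<Longrightarrow> real (degk S k v) \<le> \<epsilon> * sqrt n ^ ((k + 1) div 2)"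
    and maxdeg: "real (maxdeg t S) \<le> real n ^ 5"
  shows "(\<Sum>u\<in>S - {v}. real (card (hamming_ball q n v t \<inter> hamming_ball q n u t)))
           \<le> (20 ^ 11 * real q ^ 20 * \<epsilon> + (20 * real q ^ 2) ^ 11 / sqrt n) * Vq q n t"
proof -
  let ?I = "\<lambda>u. real (card (hamming_ball q n v t \<inter> hamming_ball q n u t))"
  have "20 * 1 \<le> 20 * real q ^ 2"
    using q by (intro mult_left_mono one_le_power) auto
  then have sqrt_n: "20 \<le> sqrt n" using large by linarith
  then have n: "n > 0" by (auto intro: ccontr)
  have "real (2 * t) \<le> 20 * sqrt n" using t by simp
  also have "\<dots> \<le> sqrt n * sqrt n" using sqrt_n by (intro mult_right_mono) auto
  finally have tn: "2 * t \<le> n" by simp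
  have "2 * real t / n * sqrt n = 2 * real t / sqrt n"
    using n by (simp add: field_simps flip: real_sqrt_mult_self[of n])
  also have "\<dots> \<le> 20"
    using t sqrt_n by (simp add: divide_le_eq)
  finally have rho: "2 * real t / n * sqrt n \<le> 20" .
  have "maxdeg t S * (20 * real q ^ 2 / sqrt n) ^ 11 \<le> sqrt n ^ 10 * (20 * real q ^ 2 / sqrt n) ^ 11"
  proof (rule mult_right_mono)
    have "sqrt n ^ 10 = (sqrt n ^ 2) ^ 5" by (simp only: power_mult[symmetric]) simp
    then show "real (maxdeg t S) \<le> sqrt n ^ 10" using maxdeg by simp
  qed simp
  also have "\<dots> = (20 * real q ^ 2) ^ 11 / sqrt n"
  proof -
    have "sqrt n ^ 11 = sqrt n ^ 10 * sqrt n" by (simp add: power_Suc2[symmetric] numeral_eq_Suc)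
    then show ?thesis using sqrt_n by (simp add: power_divide)
  qed
  finally have far_coeff: "maxdeg t S * (20 * real q ^ 2 / sqrt n) ^ 11 \<le> (20 * real q ^ 2) ^ 11 / sqrt n" .
  have fin: "finite S" using S by (rule finite_subset) simp
  have "(\<Sum>u\<in>S - {v}. ?I u)
      = (\<Sum>u\<in>{u \<in> S - {v}. hamming u v \<le> 20}. ?I u) + (\<Sum>u\<in>{u \<in> S - {v}. \<not> hamming u v \<le> 20}. ?I u)"
    using fin sum.Int_Diff[of "S - {v}" ?I "{u. hamming u v \<le> 20}"] by (simp add: Int_def set_diff_eq conj_commute)
  also have "\<dots> \<le> 20 ^ 11 * real q ^ 20 * \<epsilon> * Vq q n t + maxdeg t S * (20 * real q ^ 2 / sqrt n) ^ 11 * Vq q n t"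
    using sum_overlap_near_le[OF q n tn rho S v \<epsilon> deg] sum_overlap_far_le[OF q n tn rho large S v]
    by (rule add_mono)
  also have "\<dots> \<le> 20 ^ 11 * real q ^ 20 * \<epsilon> * Vq q n t + (20 * real q ^ 2) ^ 11 / sqrt n * Vq q n t"
    using mult_right_mono[OF far_coeff, of "real (Vq q n t)"] by simp
  finally show ?thesis
    by (simp add: algebra_simps)
qed

lemma nat_ceiling_half: "nat \<lceil>real k / 2\<rceil> = (k + 1) div 2"
proof -
  have "\<lceil>real k / 2\<rceil> = - (- int k div 2)"
    using ceiling_divide_eq_div[of "int k" 2] by simp
  also have "\<dots> = int ((k + 1) div 2)"
    by presburger
  finally show ?thesis by simp
qed

lemma powr_ceiling_half:
  assumes "x > 0"
  shows "x powr (real (nat \<lceil>real k / 2\<rceil>) / 2) = sqrt x ^ ((k + 1) div 2)"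
proof -
  have "x powr (real ((k + 1) div 2) / 2) = (x powr (1 / 2)) powr real ((k + 1) div 2)"
    by (simp add: powr_powr)
  then show ?thesis
    using assms by (simp add: nat_ceiling_half powr_half_sqrt powr_realpow)
qed

lemma card_low_degree_le_Hq:
  fixes \<epsilon> :: real
  assumes q: "q \<ge> 2" and t: "real t \<le> 10 * sqrt n" and large: "20 * real q ^ 2 \<le> sqrt n"
    and small: "(20 * real q ^ 2) ^ 11 / sqrt n \<le> \<epsilon>"
    and \<epsilon>: "(20 ^ 11 * real q ^ 20 + 1) * \<epsilon> \<le> 1 / 2"
    and S: "S \<subseteq> words q n" and maxdeg: "real (maxdeg t S) \<le> real n ^ 5"
  shows "real (card {v \<in> S. \<forall>k\<in>{1..20}.
                   real (degk S k v) \<le> \<epsilon> * real n powr (real (nat \<lceil>real k / 2\<rceil>) / 2)})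
           \<le> (1 + 2 * ((20 ^ 11 * real q ^ 20 + 1) * \<epsilon>)) * Hq q n t"
proof (rule card_le_Hq_of_small_overlap)
  let ?S1 = "{v \<in> S. \<forall>k\<in>{1..20}. real (degk S k v) \<le> \<epsilon> * real n powr (real (nat \<lceil>real k / 2\<rceil>) / 2)}"
  have "0 < 20 * real q ^ 2" using q by simp
  then have "sqrt n > 0" using large by linarith
  then have n: "real n > 0" by simp
  have "0 \<le> (20 * real q ^ 2) ^ 11 / sqrt n" by simp
  then have \<epsilon>0: "\<epsilon> \<ge> 0" using small by linarith
  show "0 \<le> (20 ^ 11 * real q ^ 20 + 1) * \<epsilon>" using \<epsilon>0 by simp
  show "?S1 \<subseteq> words q n" using S by auto
  fix v assume v: "v \<in> ?S1"
  have deg: "real (degk S k v) \<le> \<epsilon> * sqrt n ^ ((k + 1) div 2)" if "k \<in> {1..20}" for k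
  proof -
    have "real (degk S k v) \<le> \<epsilon> * real n powr (real (nat \<lceil>real k / 2\<rceil>) / 2)"
      using v that by blast
    then show ?thesis by (simp only: powr_ceiling_half[OF n])
  qed
  have "(\<Sum>u\<in>?S1 - {v}. real (card (hamming_ball q n v t \<inter> hamming_ball q n u t)))
      \<le> (\<Sum>u\<in>S - {v}. real (card (hamming_ball q n v t \<inter> hamming_ball q n u t)))"
    using S by (intro sum_mono2) (auto intro: finite_subset)
  also have "\<dots> \<le> (20 ^ 11 * real q ^ 20 * \<epsilon> + (20 * real q ^ 2) ^ 11 / sqrt n) * Vq q n t"
    using v by (intro sum_overlap_le[OF q t large S _ \<epsilon>0 deg maxdeg]) auto
  also have "\<dots> \<le> (20 ^ 11 * real q ^ 20 + 1) * \<epsilon> * Vq q n t"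
    using small by (intro mult_right_mono) (auto simp: algebra_simps)
  finally show "(\<Sum>u\<in>?S1 - {v}. real (card (hamming_ball q n v t \<inter> hamming_ball q n u t)))
      \<le> (20 ^ 11 * real q ^ 20 + 1) * \<epsilon> * Vq q n t" .
qed (use \<epsilon> in auto)

theorem lemma4p3:
  fixes q :: nat
  assumes "q \<ge> 2"
  shows "\<exists>C::real. C > 0 \<and>
    (\<forall>\<epsilon>::real. 0 < \<epsilon> \<and> \<epsilon> < 1 / C \<longrightarrow>
      (\<exists>n0::nat. \<forall>n t::nat. \<forall>S. n \<ge> n0 \<and> 0 < t \<and> real t \<le> 10 * sqrt (real n)
          \<and> S \<subseteq> words q n \<and> real (maxdeg t S) \<le> real n ^ 5 \<longrightarrow>
          real (card {v \<in> S. \<forall>k\<in>{1..20}.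
                   real (degk S k v) \<le> \<epsilon> * real n powr (real (nat \<lceil>real k / 2\<rceil>) / 2)})
            \<le> (1 + C * \<epsilon>) * Hq q n t))"
proof -
  define C0 :: real where "C0 = 20 ^ 11 * real q ^ 20 + 1"
  have C0: "C0 > 0" by (simp add: C0_def add_nonneg_pos)
  show ?thesis
  proof (intro exI[of _ "2 * C0"] conjI allI impI)
    fix \<epsilon> :: real assume \<epsilon>: "0 < \<epsilon> \<and> \<epsilon> < 1 / (2 * C0)"
    define M where "M = 20 * real q ^ 2 + (20 * real q ^ 2) ^ 11 / \<epsilon>"
    show "\<exists>n0::nat. \<forall>n t S. n \<ge> n0 \<and> 0 < t \<and> real t \<le> 10 * sqrt (real n)
          \<and> S \<subseteq> words q n \<and> real (maxdeg t S) \<le> real n ^ 5 \<longrightarrow>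
          real (card {v \<in> S. \<forall>k\<in>{1..20}.
                   real (degk S k v) \<le> \<epsilon> * real n powr (real (nat \<lceil>real k / 2\<rceil>) / 2)})
            \<le> (1 + 2 * C0 * \<epsilon>) * Hq q n t"
    proof (intro exI[of _ "nat \<lceil>M ^ 2\<rceil>"] allI impI, elim conjE)
      fix n t :: nat and S
      assume n: "nat \<lceil>M ^ 2\<rceil> \<le> n" and t: "real t \<le> 10 * sqrt n"
        and S: "S \<subseteq> words q n" and maxdeg: "real (maxdeg t S) \<le> real n ^ 5"
      have "M \<le> sqrt n" using n by (intro real_le_rsqrt) linarith
      moreover have "(20 * real q ^ 2) ^ 11 / \<epsilon> \<ge> 0" and "20 * real q ^ 2 \<ge> 0"
        using \<epsilon> by simp_all
      ultimately have large: "20 * real q ^ 2 \<le> sqrt n" and "(20 * real q ^ 2) ^ 11 / \<epsilon> \<le> sqrt n"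
        unfolding M_def by linarith+
      then have small: "(20 * real q ^ 2) ^ 11 / sqrt n \<le> \<epsilon>"
        using \<epsilon> assms by (simp add: divide_le_eq mult.commute)
      have half: "C0 * \<epsilon> \<le> 1 / 2" using \<epsilon> C0 by (simp add: field_simps)
      show "real (card {v \<in> S. \<forall>k\<in>{1..20}.
                   real (degk S k v) \<le> \<epsilon> * real n powr (real (nat \<lceil>real k / 2\<rceil>) / 2)})
            \<le> (1 + 2 * C0 * \<epsilon>) * Hq q n t"
        using card_low_degree_le_Hq[OF assms t large small half[unfolded C0_def] S maxdeg]
        unfolding C0_def by (simp only: mult.assoc)
    qed
  qed (use C0 in simp)
qed

end
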